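(* Let $(X_1,M_1),\dots,(X_n,M_n)$ be i.i.d. copies of $(X,M)\sim\mathbb{P}_{X,M}$ (no assumption on the missingness mechanism), let $\{P_\theta:\theta\in\Theta\}$ be a model of distributions on $\mathbb{R}^d$, and let $$ \theta_n^{\mathrm{MMD}}\in\arg\min_{\theta\in\Theta}\frac1n\sum_{i=1}^n \mathbb{D}^2\big(P_\theta^{(M_i)},\delta_{\{X_i^{(M_i)}\}}\big). $$ Assume: (1) $\Theta$ is compact and the minimizer $$\theta_\infty^{\mathrm{MMD}}=\arg\min_{\theta\in\Theta}\mathbb{E}_{M\sim\mathbb{P}_M}\Big[\mathbb{D}^2\big(P_\theta^{(M)},\mathbb{P}_{X\mid M}^{(M)}\big)\Big]$$ exists and is unique; (2) for each $m\in\{0,1\}^d$ in the support of $\mathbb{P}_M$, the map $\theta\mapsto\Phi(P_\theta^{(m)})$ from $\Theta$ to $\mathcal{H}$ is continuous. Then $\theta_n^{\mathrm{MMD}}\to\theta_\infty^{\mathrm{MMD}}$ $\mathbb{P}_{X,M}$-almost surely as $n\to\infty$.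
   Context: $X\in\mathbb{R}^d$ is the data vector, $M\in\{0,1\}^d$ the missingness mask ($M_j=0$: $X_j$ observed; $M_j=1$: missing); $\mathbb{P}_{X,M}$ is their joint law, $\mathbb{P}_M$ the law of $M$, and $\mathbb{P}_{X\mid M=m}$ the conditional law of $X$ given $M=m$. For $m\in\{0,1\}^d$, $x^{(m)}$ is the subvector of observed coordinates $\{j:m_j=0\}$, and for a distribution $Q$ on $\mathbb{R}^d$, $Q^{(m)}$ is the law of $Y^{(m)}$ for $Y\sim Q$. Convention: in every expectation over $M$ the empty pattern $(1,\dots,1)$ is excluded, i.e. $\mathbb{E}_M[f(M)]=\sum_{m\neq(1,\dots,1)}\mathbb{P}[M=m]f(m)$ (correspondingly, terms with $M_i=(1,\dots,1)$ in the empirical sum contribute zero). $k$ is a positive definite kernel bounded by $1$, characteristic, and dimension-independent (the same formula defines it in every dimension, e.g. Gaussian kernel), with RKHS $\mathcal{H}$; $\Phi(Q)=\mathbb{E}_{Y\sim Q}[k(Y,\cdot)]\in\mathcal{H}$ is the kernel mean embedding (and $\Phi(x)=k(x,\cdot)$), and $\mathbb{D}(Q_1,Q_2)=\|\Phi(Q_1)-\Phi(Q_2)\|_{\mathcal{H}}$ is the maximum mean discrepancy. *)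

theory Defs
  imports "HOL-Probability.Probability"
begin

text \<open>Data space R^d (coordinates indexed by a finite type 'd), mask space {0,1}^d
  (a mask m :: 'd => bool, m j = True meaning coordinate j is missing).\<close>

definition Xspace :: "('d \<Rightarrow> real) measure" where
  "Xspace = PiM UNIV (\<lambda>_. borel)"

definition Mspace :: "('d \<Rightarrow> bool) measure" where
  "Mspace = count_space UNIV"

definition XMspace :: "(('d \<Rightarrow> real) \<times> ('d \<Rightarrow> bool)) measure" where
  "XMspace = Xspace \<Otimes>\<^sub>M Mspace"

definition obs :: "('d \<Rightarrow> bool) \<Rightarrow> 'd set" where
  "obs m = {j. \<not> m j}"

definition empty_pattern :: "'d \<Rightarrow> bool" where
  "empty_pattern = (\<lambda>_. True)"

definition Ospace :: "('d \<Rightarrow> bool) \<Rightarrow> ('d \<Rightarrow> real) measure" where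
  "Ospace m = PiM (obs m) (\<lambda>_. borel)"

definition subvec :: "('d \<Rightarrow> bool) \<Rightarrow> ('d \<Rightarrow> real) \<Rightarrow> ('d \<Rightarrow> real)" where
  "subvec m x = restrict x (obs m)"

definition marg :: "('d \<Rightarrow> bool) \<Rightarrow> ('d \<Rightarrow> real) measure \<Rightarrow> ('d \<Rightarrow> real) measure" where
  "marg m Q = distr Q (Ospace m) (subvec m)"

definition probM :: "(('d \<Rightarrow> real) \<times> ('d \<Rightarrow> bool)) measure \<Rightarrow> ('d \<Rightarrow> bool) \<Rightarrow> real" where
  "probM PXM m = measure PXM (UNIV \<times> {m})"

definition condX :: "(('d \<Rightarrow> real) \<times> ('d \<Rightarrow> bool)) measure \<Rightarrow> ('d \<Rightarrow> bool) \<Rightarrow> ('d \<Rightarrow> real) measure" where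
  "condX PXM m = distr (uniform_measure PXM (UNIV \<times> {m})) Xspace fst"

text \<open>Squared MMD between Q1 and Q2 for a kernel k:
  ||Phi(Q1) - Phi(Q2)||_H^2 = E k(Y,Y') - 2 E k(Y,Z) + E k(Z,Z'),
  Y,Y' ~ Q1, Z,Z' ~ Q2 independent (expansion of the RKHS norm via the reproducing property).\<close>
definition mmd2 :: "('a \<Rightarrow> 'a \<Rightarrow> real) \<Rightarrow> 'a measure \<Rightarrow> 'a measure \<Rightarrow> real" where
  "mmd2 k Q1 Q2 =
     (\<integral>x. (\<integral>y. k x y \<partial>Q1) \<partial>Q1) - 2 * (\<integral>x. (\<integral>y. k x y \<partial>Q2) \<partial>Q1)
     + (\<integral>x. (\<integral>y. k x y \<partial>Q2) \<partial>Q2)"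

definition mmd :: "('a \<Rightarrow> 'a \<Rightarrow> real) \<Rightarrow> 'a measure \<Rightarrow> 'a measure \<Rightarrow> real" where
  "mmd k Q1 Q2 = sqrt (mmd2 k Q1 Q2)"

definition pd_kernel_on :: "'a measure \<Rightarrow> ('a \<Rightarrow> 'a \<Rightarrow> real) \<Rightarrow> bool" where
  "pd_kernel_on S k \<longleftrightarrow>
     (\<forall>x\<in>space S. \<forall>y\<in>space S. k x y = k y x) \<and>
     (\<forall>n (xs :: nat \<Rightarrow> 'a) (c :: nat \<Rightarrow> real). (\<forall>i<n. xs i \<in> space S) \<longrightarrow>
        (\<Sum>i<n. \<Sum>j<n. c i * c j * k (xs i) (xs j)) \<ge> 0)"

definition characteristic_kernel_on :: "'a measure \<Rightarrow> ('a \<Rightarrow> 'a \<Rightarrow> real) \<Rightarrow> bool" where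
  "characteristic_kernel_on S k \<longleftrightarrow>
     (\<forall>P Q. prob_space P \<longrightarrow> prob_space Q \<longrightarrow> sets P = sets S \<longrightarrow> sets Q = sets S \<longrightarrow>
        mmd k P Q = 0 \<longrightarrow> P = Q)"

definition good_kernel_on :: "'a measure \<Rightarrow> ('a \<Rightarrow> 'a \<Rightarrow> real) \<Rightarrow> bool" where
  "good_kernel_on S k \<longleftrightarrow>
     case_prod k \<in> borel_measurable (S \<Otimes>\<^sub>M S) \<and>
     pd_kernel_on S k \<and>
     (\<forall>x\<in>space S. \<forall>y\<in>space S. \<bar>k x y\<bar> \<le> 1) \<and>
     characteristic_kernel_on S k"

definition emp_risk ::
  "('d set \<Rightarrow> ('d \<Rightarrow> real) \<Rightarrow> ('d \<Rightarrow> real) \<Rightarrow> real) \<Rightarrow> ('p \<Rightarrow> ('d \<Rightarrow> real) measure)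
   \<Rightarrow> (nat \<Rightarrow> ('d \<Rightarrow> real) \<times> ('d \<Rightarrow> bool)) \<Rightarrow> nat \<Rightarrow> 'p \<Rightarrow> real" where
  "emp_risk k P z n \<theta> = (1 / real n) *
     (\<Sum>i<n. if snd (z i) = empty_pattern then 0 else
        (mmd (k (obs (snd (z i)))) (marg (snd (z i)) (P \<theta>))
             (return (Ospace (snd (z i))) (subvec (snd (z i)) (fst (z i)))))\<^sup>2)"

definition pop_risk ::
  "('d::finite set \<Rightarrow> ('d \<Rightarrow> real) \<Rightarrow> ('d \<Rightarrow> real) \<Rightarrow> real) \<Rightarrow> ('p \<Rightarrow> ('d \<Rightarrow> real) measure)
   \<Rightarrow> (('d \<Rightarrow> real) \<times> ('d \<Rightarrow> bool)) measure \<Rightarrow> 'p \<Rightarrow> real" where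
  "pop_risk k P PXM \<theta> =
     (\<Sum>m \<in> UNIV - {empty_pattern}. probM PXM m *
        (mmd (k (obs m)) (marg m (P \<theta>)) (marg m (condX PXM m)))\<^sup>2)"

end

theory Submission
  imports Defs "HOL-Probability.Hoeffding"
begin

(*
  Each sample contributes the loss D^2(P_theta^(m), delta_(x^(m))), whose expectation is the
  population risk plus a constant independent of theta.  Writing
  <Q1, Q2> = integral integral k dQ1 dQ2, positive definiteness of k on points passes to
  probability measures by averaging k over many independent samples; this gives Cauchy-Schwarz
  and the triangle inequality for D.  Hence the loss is bounded by 4 and, on patterns of positive
  probability, moves by at most 4 * D(P_theta^(m), P_theta'^(m)) when theta moves.  Compactness and
  continuity turn this into finite nets, so the strong law of large numbers (Hoeffding plus
  Borel-Cantelli) at the net points makes the empirical risk converge uniformly almost surely, and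
  the unique minimiser of the continuous limit on the compact set attracts the empirical minimisers.
*)

lemma (in prob_space) integrable_bounded:
  fixes f :: "'a \<Rightarrow> real"
  assumes "f \<in> borel_measurable M" "\<And>x. x \<in> space M \<Longrightarrow> \<bar>f x\<bar> \<le> B"
  shows "integrable M f"
  using assms by (intro integrable_const_bound[where B=B]) (auto intro: AE_I2)

lemma (in prob_space) abs_integral_le_bound:
  fixes f :: "'a \<Rightarrow> real"
  assumes "f \<in> borel_measurable M" "\<And>x. x \<in> space M \<Longrightarrow> \<bar>f x\<bar> \<le> B"
  shows "\<bar>\<integral>x. f x \<partial>M\<bar> \<le> B"
proof -
  have "\<bar>\<integral>x. f x \<partial>M\<bar> \<le> (\<integral>x. \<bar>f x\<bar> \<partial>M)"
    by (rule integral_abs_bound)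
  also have "\<dots> \<le> (\<integral>x. B \<partial>M)"
    using assms by (intro integral_mono integrable_bounded) auto
  finally show ?thesis by (simp add: prob_space)
qed

lemma (in prob_space) abs_integral_diff_le:
  fixes f g :: "'a \<Rightarrow> real"
  assumes "integrable M f" "integrable M g" "AE x in M. \<bar>f x - g x\<bar> \<le> d"
  shows "\<bar>(\<integral>x. f x \<partial>M) - (\<integral>x. g x \<partial>M)\<bar> \<le> d"
proof -
  have "\<bar>(\<integral>x. f x \<partial>M) - (\<integral>x. g x \<partial>M)\<bar> \<le> (\<integral>x. \<bar>f x - g x\<bar> \<partial>M)"
    using assms by (simp add: integral_abs_bound flip: Bochner_Integration.integral_diff)
  also have "\<dots> \<le> (\<integral>x. d \<partial>M)"
    using assms by (intro integral_mono_AE) auto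
  finally show ?thesis by (simp add: prob_space)
qed

lemma (in finite_measure) integral_uniform_measure:
  fixes f :: "'a \<Rightarrow> real"
  assumes A: "A \<in> sets M" "measure M A > 0" and f: "f \<in> borel_measurable M"
  shows "(\<integral>x. f x \<partial>uniform_measure M A) = (\<integral>x. indicator A x * f x \<partial>M) / measure M A"
proof -
  have "uniform_measure M A = density M (\<lambda>x. ennreal (indicator A x / measure M A))"
    unfolding uniform_measure_def
  proof (rule density_cong)
    show "AE x in M. indicator A x / emeasure M A = ennreal (indicator A x / measure M A)"
      using A by (intro AE_I2) (simp add: emeasure_eq_measure divide_ennreal[symmetric] ennreal_indicator)
    show "(\<lambda>x. indicator A x / emeasure M A) \<in> borel_measurable M"
      using A by measurable
    show "(\<lambda>x. ennreal (indicator A x / measure M A)) \<in> borel_measurable M"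
      using A by measurable
  qed
  then have "(\<integral>x. f x \<partial>uniform_measure M A) = (\<integral>x. indicator A x / measure M A * f x \<partial>M)"
    using A f by (simp add: integral_density)
  then show ?thesis
    by (simp add: mult.commute)
qed

lemma (in product_prob_space) distr_PiM_component_pair:
  assumes "p \<in> I" "q \<in> I" "p \<noteq> q"
  shows "distr (PiM I M) (M p \<Otimes>\<^sub>M M q) (\<lambda>\<omega>. (\<omega> p, \<omega> q)) = M p \<Otimes>\<^sub>M M q"
proof (rule sym, rule pair_measure_eqI)
  have meas: "(\<lambda>\<omega>. (\<omega> p, \<omega> q)) \<in> PiM I M \<rightarrow>\<^sub>M M p \<Otimes>\<^sub>M M q"
    using assms by measurable
  fix A B assume A: "A \<in> sets (M p)" and B: "B \<in> sets (M q)"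
  define X where "X = (\<lambda>i. if i = p then A else B)"
  have "(\<lambda>\<omega>. (\<omega> p, \<omega> q)) -` (A \<times> B) \<inter> space (PiM I M) = prod_emb I M {p, q} (Pi\<^sub>E {p, q} X)"
    using assms by (auto simp: prod_emb_def space_PiM X_def PiE_iff)
  moreover have "emeasure (PiM I M) (prod_emb I M {p, q} (Pi\<^sub>E {p, q} X)) = emeasure (M p) A * emeasure (M q) B"
    using assms A B by (subst emeasure_PiM_emb) (auto simp: X_def)
  ultimately show "emeasure (M p) A * emeasure (M q) B
      = emeasure (distr (PiM I M) (M p \<Otimes>\<^sub>M M q) (\<lambda>\<omega>. (\<omega> p, \<omega> q))) (A \<times> B)"
    using A B by (simp add: emeasure_distr[OF meas])
qed (simp_all add: M.sigma_finite_measure_axioms)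

lemma sum_mod_replicate:
  fixes f :: "nat \<Rightarrow> 'a::comm_semiring_1"
  shows "(\<Sum>p<r * N. f (p mod r)) = of_nat N * (\<Sum>i<r. f i)"
proof (induction N)
  case (Suc N)
  have "(\<Sum>p<r * Suc N. f (p mod r)) = (\<Sum>p<r * N. f (p mod r)) + (\<Sum>p\<in>{r * N..<r * N + r}. f (p mod r))"
    by (simp add: sum.atLeastLessThan_concat atLeast0LessThan[symmetric] add.commute)
  also have "(\<Sum>p\<in>{r * N..<r * N + r}. f (p mod r)) = (\<Sum>i<r. f i)"
    using sum.shift_bounds_nat_ivl[of "\<lambda>p. f (p mod r)" 0 "r * N" r]
    by (simp add: atLeast0LessThan add.commute)
  finally show ?case using Suc by (simp add: algebra_simps)
qed simp

lemma nonneg_if_quadratic_lower_bound: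
  fixes C F :: real
  assumes "\<And>N::nat. - (real N * C) \<le> (real N)\<^sup>2 * F"
  shows "0 \<le> F"
proof (rule ccontr)
  assume "\<not> 0 \<le> F"
  then have F: "F < 0" by simp
  obtain N :: nat where N: "max 0 (C / - F) < real N"
    using reals_Archimedean2 by blast
  then have "0 < real N" "C / - F < real N"
    by auto
  then have "C < real N * - F"
    using F by (subst (asm) pos_divide_less_eq) auto
  then have "real N * F + C < 0"
    by simp
  with \<open>0 < real N\<close> have "real N * (real N * F + C) < 0"
    by (rule mult_pos_neg)
  with assms[of N] show False
    by (simp add: power2_eq_square algebra_simps)
qed

lemma quadratic_nonneg_discriminant:
  fixes U W V :: real
  assumes U: "0 \<le> U" and nonneg: "\<And>t. 0 \<le> t\<^sup>2 * U + 2 * t * W + V"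
  shows "W\<^sup>2 \<le> U * V"
proof (cases "U = 0")
  case True
  have "W = 0"
  proof (rule ccontr)
    assume "W \<noteq> 0"
    have "0 \<le> (- (V + 1) / (2 * W))\<^sup>2 * U + 2 * (- (V + 1) / (2 * W)) * W + V"
      by (rule nonneg)
    also have "\<dots> = -1"
      using True \<open>W \<noteq> 0\<close> by (simp add: field_simps)
    finally show False by simp
  qed
  then show ?thesis using True by simp
next
  case False
  then have "0 < U" using U by simp
  have "0 \<le> (- W / U)\<^sup>2 * U + 2 * (- W / U) * W + V" by (rule nonneg)
  also have "\<dots> = V - W\<^sup>2 / U"
    using \<open>0 < U\<close> by (simp add: field_simps power2_eq_square)
  finally show ?thesis
    using \<open>0 < U\<close> by (simp add: divide_le_eq mult.commute)
qed

lemma sqrt_add_le_of_cauchy_schwarz: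
  fixes U W V :: real
  assumes "W\<^sup>2 \<le> U * V" "0 \<le> U" "0 \<le> V"
  shows "sqrt (U + 2 * W + V) \<le> sqrt U + sqrt V"
proof -
  have "W \<le> sqrt U * sqrt V"
    using real_sqrt_le_mono[OF assms(1)] by (simp add: real_sqrt_mult)
  then have "U + 2 * W + V \<le> (sqrt U + sqrt V)\<^sup>2"
    using assms by (simp add: power2_sum)
  then have "sqrt (U + 2 * W + V) \<le> sqrt ((sqrt U + sqrt V)\<^sup>2)"
    by (rule real_sqrt_le_mono)
  then show ?thesis
    using assms by simp
qed

section \<open>Kernel pairing of probability measures\<close>

definition prob_on :: "'a measure \<Rightarrow> 'a measure \<Rightarrow> bool" where
  "prob_on S Q \<longleftrightarrow> prob_space Q \<and> sets Q = sets S"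

lemma prob_on_space: "prob_on S Q \<Longrightarrow> space Q = space S"
  unfolding prob_on_def by (metis sets_eq_imp_space_eq)

lemma prob_on_return: "w \<in> space S \<Longrightarrow> prob_on S (return S w)"
  by (simp add: prob_on_def prob_space_return)

lemma pair_prob_space_prob_on: "prob_on S Q1 \<Longrightarrow> prob_on S' Q2 \<Longrightarrow> pair_prob_space Q1 Q2"
  by (simp add: prob_on_def pair_prob_space_def pair_sigma_finite_def prob_space_imp_sigma_finite)

definition kernel_pairing :: "('a \<Rightarrow> 'a \<Rightarrow> real) \<Rightarrow> 'a measure \<Rightarrow> 'a measure \<Rightarrow> real" where
  "kernel_pairing \<kappa> Q1 Q2 = (\<integral>x. (\<integral>y. \<kappa> x y \<partial>Q2) \<partial>Q1)"

lemma mmd2_kernel_pairing: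
  "mmd2 \<kappa> Q1 Q2 = kernel_pairing \<kappa> Q1 Q1 - 2 * kernel_pairing \<kappa> Q1 Q2 + kernel_pairing \<kappa> Q2 Q2"
  by (simp add: mmd2_def kernel_pairing_def)

lemma mmd_self [simp]: "mmd \<kappa> Q Q = 0"
  by (simp add: mmd_def mmd2_kernel_pairing)

definition kernel_gram ::
  "('a \<Rightarrow> 'a \<Rightarrow> real) \<Rightarrow> (nat \<Rightarrow> 'a measure) \<Rightarrow> nat \<Rightarrow> (nat \<Rightarrow> real) \<Rightarrow> (nat \<Rightarrow> real) \<Rightarrow> real" where
  "kernel_gram \<kappa> Q r a b = (\<Sum>i<r. \<Sum>j<r. a i * b j * kernel_pairing \<kappa> (Q i) (Q j))"

definition kernel_variance :: "('a \<Rightarrow> 'a \<Rightarrow> real) \<Rightarrow> 'a measure \<Rightarrow> real" where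
  "kernel_variance \<kappa> C = (\<integral>w. \<kappa> w w \<partial>C) - kernel_pairing \<kappa> C C"

locale good_kernel =
  fixes S :: "'a measure" and \<kappa> :: "'a \<Rightarrow> 'a \<Rightarrow> real"
  assumes good: "good_kernel_on S \<kappa>"
begin

lemma kernel_commute: "x \<in> space S \<Longrightarrow> y \<in> space S \<Longrightarrow> \<kappa> x y = \<kappa> y x"
  using good unfolding good_kernel_on_def pd_kernel_on_def by blast

lemma abs_kernel_le_1: "x \<in> space S \<Longrightarrow> y \<in> space S \<Longrightarrow> \<bar>\<kappa> x y\<bar> \<le> 1"
  using good unfolding good_kernel_on_def by blast

lemma kernel_psd:
  fixes n :: nat
  assumes "\<And>i. i < n \<Longrightarrow> xs i \<in> space S"
  shows "0 \<le> (\<Sum>i<n. \<Sum>j<n. c i * c j * \<kappa> (xs i) (xs j))"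
proof -
  have "\<forall>n xs (c :: nat \<Rightarrow> real). (\<forall>i<n. xs i \<in> space S) \<longrightarrow>
      0 \<le> (\<Sum>i<n. \<Sum>j<n. c i * c j * \<kappa> (xs i) (xs j))"
    using good unfolding good_kernel_on_def pd_kernel_on_def by blast
  then show ?thesis using assms by blast
qed

lemma measurable_kernel:
  assumes "sets Q1 = sets S" "sets Q2 = sets S"
  shows "case_prod \<kappa> \<in> borel_measurable (Q1 \<Otimes>\<^sub>M Q2)"
  unfolding measurable_cong_sets[OF sets_pair_measure_cong[OF assms] refl]
  using good by (simp add: good_kernel_on_def)

lemma measurable_kernel_section:
  assumes "sets Q = sets S" "x \<in> space S"
  shows "\<kappa> x \<in> borel_measurable Q"
  unfolding measurable_cong_sets[OF assms(1) refl]
  using measurable_Pair2[OF measurable_kernel[OF refl refl] assms(2)] by simp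

lemma measurable_kernel_integral:
  assumes "prob_on S Q" "sets M = sets S"
  shows "(\<lambda>x. \<integral>y. \<kappa> x y \<partial>Q) \<in> borel_measurable M"
proof -
  interpret prob_space Q using assms unfolding prob_on_def by auto
  show ?thesis
    using assms by (intro borel_measurable_lebesgue_integral measurable_kernel) (auto simp: prob_on_def)
qed

lemma abs_kernel_integral_le_1:
  assumes "prob_on S Q" "x \<in> space S"
  shows "\<bar>\<integral>y. \<kappa> x y \<partial>Q\<bar> \<le> 1"
  using assms by (intro prob_space.abs_integral_le_bound measurable_kernel_section abs_kernel_le_1)
    (auto simp: prob_on_def prob_on_space)

lemma abs_kernel_pairing_le_1:
  assumes "prob_on S Q1" "prob_on S Q2"
  shows "\<bar>kernel_pairing \<kappa> Q1 Q2\<bar> \<le> 1"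
  unfolding kernel_pairing_def
  using assms by (intro prob_space.abs_integral_le_bound measurable_kernel_integral abs_kernel_integral_le_1)
    (auto simp: prob_on_def prob_on_space)

lemma integrable_kernel:
  assumes "prob_on S Q1" "prob_on S Q2"
  shows "integrable (Q1 \<Otimes>\<^sub>M Q2) (case_prod \<kappa>)"
proof -
  interpret pair_prob_space Q1 Q2
    using assms by (rule pair_prob_space_prob_on)
  show ?thesis
    using assms by (intro P.integrable_bounded[where B=1] measurable_kernel)
      (auto simp: prob_on_def prob_on_space space_pair_measure abs_kernel_le_1)
qed

lemma kernel_pairing_eq_integral:
  assumes "prob_on S Q1" "prob_on S Q2"
  shows "kernel_pairing \<kappa> Q1 Q2 = (\<integral>z. case_prod \<kappa> z \<partial>(Q1 \<Otimes>\<^sub>M Q2))"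
proof -
  interpret pair_prob_space Q1 Q2
    using assms by (rule pair_prob_space_prob_on)
  show ?thesis
    unfolding kernel_pairing_def using integral_fst'[OF integrable_kernel[OF assms]] by simp
qed

lemma kernel_pairing_commute:
  assumes "prob_on S Q1" "prob_on S Q2"
  shows "kernel_pairing \<kappa> Q1 Q2 = kernel_pairing \<kappa> Q2 Q1"
proof -
  interpret pair_prob_space Q1 Q2
    using assms by (rule pair_prob_space_prob_on)
  have "kernel_pairing \<kappa> Q1 Q2 = (\<integral>y. (\<integral>x. \<kappa> x y \<partial>Q1) \<partial>Q2)"
    unfolding kernel_pairing_def by (rule Fubini_integral[OF integrable_kernel[OF assms], symmetric])
  also have "\<dots> = kernel_pairing \<kappa> Q2 Q1"
    unfolding kernel_pairing_def using assms
    by (intro Bochner_Integration.integral_cong refl) (auto simp: prob_on_space kernel_commute)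
  finally show ?thesis .
qed

lemma kernel_pairing_return_left:
  assumes "prob_on S Q" "w \<in> space S"
  shows "kernel_pairing \<kappa> (return S w) Q = (\<integral>y. \<kappa> w y \<partial>Q)"
  unfolding kernel_pairing_def using assms
  by (intro integral_return measurable_kernel_integral) (auto simp: prob_on_def)

lemma integral_kernel_components:
  assumes M: "\<And>i. prob_on S (M i)" and pq: "p \<in> I" "q \<in> I" "p \<noteq> q"
  shows "(\<integral>\<omega>. \<kappa> (\<omega> p) (\<omega> q) \<partial>PiM I M) = kernel_pairing \<kappa> (M p) (M q)"
proof -
  interpret product_prob_space M
    using M by (intro product_prob_spaceI) (simp add: prob_on_def)
  have sets: "sets (M i) = sets S" for i
    using M by (simp add: prob_on_def)
  have "(\<lambda>\<omega>. (\<omega> p, \<omega> q)) \<in> PiM I M \<rightarrow>\<^sub>M M p \<Otimes>\<^sub>M M q"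
    using pq by measurable
  then have "(\<integral>\<omega>. \<kappa> (\<omega> p) (\<omega> q) \<partial>PiM I M)
      = (\<integral>z. case_prod \<kappa> z \<partial>distr (PiM I M) (M p \<Otimes>\<^sub>M M q) (\<lambda>\<omega>. (\<omega> p, \<omega> q)))"
    by (subst integral_distr) (simp_all add: measurable_kernel[OF sets sets])
  also have "\<dots> = kernel_pairing \<kappa> (M p) (M q)"
    by (simp add: distr_PiM_component_pair[OF pq] kernel_pairing_eq_integral[OF M M])
  finally show ?thesis .
qed

lemma integrable_kernel_components:
  assumes M: "\<And>i. prob_on S (M i)" and pq: "p \<in> I" "q \<in> I"
  shows "integrable (PiM I M) (\<lambda>\<omega>. \<kappa> (\<omega> p) (\<omega> q))"
proof (rule prob_space.integrable_bounded)
  show "prob_space (PiM I M)"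
    using M by (intro prob_space_PiM) (simp add: prob_on_def)
  have "(\<lambda>\<omega>. (\<omega> p, \<omega> q)) \<in> PiM I M \<rightarrow>\<^sub>M M p \<Otimes>\<^sub>M M q"
    using pq by (intro measurable_Pair measurable_component_singleton)
  from measurable_comp[OF this measurable_kernel] M
  show "(\<lambda>\<omega>. \<kappa> (\<omega> p) (\<omega> q)) \<in> borel_measurable (PiM I M)"
    by (simp add: comp_def prob_on_def)
  fix \<omega> assume "\<omega> \<in> space (PiM I M)"
  then show "\<bar>\<kappa> (\<omega> p) (\<omega> q)\<bar> \<le> 1"
    using pq prob_on_space[OF M] by (intro abs_kernel_le_1) (auto simp: space_PiM)
qed

(* Integrate positive definiteness of kappa against independent samples omega p ~ M p: the
   off-diagonal terms have expectation kernel_pairing, the diagonal ones are off by at most 2. *)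
lemma kernel_pairing_sum_ge:
  fixes n :: nat and w :: "nat \<Rightarrow> real"
  assumes M: "\<And>i. prob_on S (M i)"
  shows "- 2 * (\<Sum>p<n. (w p)\<^sup>2) \<le> (\<Sum>p<n. \<Sum>q<n. w p * w q * kernel_pairing \<kappa> (M p) (M q))"
proof -
  let ?\<Omega> = "PiM {..<n} M"
  let ?G = "\<lambda>p q. kernel_pairing \<kappa> (M p) (M q)"
  define E where "E p q = (\<integral>\<omega>. \<kappa> (\<omega> p) (\<omega> q) \<partial>?\<Omega>)" for p q
  interpret \<Omega>: prob_space ?\<Omega>
    using M by (intro prob_space_PiM) (simp add: prob_on_def)
  have space: "\<omega> p \<in> space S" if "\<omega> \<in> space ?\<Omega>" "p < n" for \<omega> p
    using that prob_on_space[OF M] by (auto simp: space_PiM PiE_iff)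
  have integrable: "integrable ?\<Omega> (\<lambda>\<omega>. \<kappa> (\<omega> p) (\<omega> q))" if "p < n" "q < n" for p q
    using that by (intro integrable_kernel_components M) auto
  have diagonal: "E p p - ?G p p \<le> 2" if "p < n" for p
  proof -
    have "\<bar>E p p\<bar> \<le> 1"
      unfolding E_def using that integrable[OF that that]
      by (intro \<Omega>.abs_integral_le_bound) (auto intro: abs_kernel_le_1 space)
    moreover have "\<bar>?G p p\<bar> \<le> 1" by (rule abs_kernel_pairing_le_1[OF M M])
    ultimately show ?thesis by linarith
  qed
  have off_diagonal: "E p q = ?G p q" if "p < n" "q < n" "p \<noteq> q" for p q
    unfolding E_def using that by (intro integral_kernel_components M) auto
  have "0 \<le> (\<integral>\<omega>. (\<Sum>p<n. \<Sum>q<n. w p * w q * \<kappa> (\<omega> p) (\<omega> q)) \<partial>?\<Omega>)"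
    by (intro integral_nonneg_AE AE_I2 kernel_psd space)
  also have "\<dots> = (\<Sum>p<n. \<Sum>q<n. w p * w q * E p q)"
    unfolding E_def
    by (subst Bochner_Integration.integral_sum,
        use integrable in \<open>auto intro!: Bochner_Integration.integrable_sum\<close>)+
  also have "\<dots> = (\<Sum>p<n. \<Sum>q<n. w p * w q * ?G p q) + (\<Sum>p<n. \<Sum>q<n. w p * w q * (E p q - ?G p q))"
    by (simp add: right_diff_distrib sum_subtractf)
  also have "(\<Sum>p<n. \<Sum>q<n. w p * w q * (E p q - ?G p q)) = (\<Sum>p<n. (w p)\<^sup>2 * (E p p - ?G p p))"
  proof (rule sum.cong[OF refl])
    fix p assume p: "p \<in> {..<n}"
    have "(\<Sum>q<n. w p * w q * (E p q - ?G p q)) = (\<Sum>q<n. if q = p then (w p)\<^sup>2 * (E p p - ?G p p) else 0)"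
      using p off_diagonal by (intro sum.cong) (auto simp: power2_eq_square)
    also have "\<dots> = (w p)\<^sup>2 * (E p p - ?G p p)"
      using p by simp
    finally show "(\<Sum>q<n. w p * w q * (E p q - ?G p q)) = (w p)\<^sup>2 * (E p p - ?G p p)" .
  qed
  also have "\<dots> \<le> (\<Sum>p<n. (w p)\<^sup>2 * 2)"
    using diagonal by (intro sum_mono mult_left_mono) auto
  also have "\<dots> = 2 * (\<Sum>p<n. (w p)\<^sup>2)"
    by (simp add: sum_distrib_left mult.commute)
  finally show ?thesis by linarith
qed

(* Repeating the family N times in kernel_pairing_sum_ge gives N^2 F >= -2 N C for the Gram
   form F, hence F >= 0. *)
lemma kernel_gram_nonneg:
  assumes Q: "\<And>i. i < r \<Longrightarrow> prob_on S (Q i)"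
  shows "0 \<le> kernel_gram \<kappa> Q r c c"
proof (cases "r = 0")
  case False
  define g where "g i j = c i * c j * kernel_pairing \<kappa> (Q i) (Q j)" for i j
  have "- (real N * (2 * (\<Sum>i<r. (c i)\<^sup>2))) \<le> (real N)\<^sup>2 * kernel_gram \<kappa> Q r c c" for N
  proof -
    have "- 2 * (\<Sum>p<r * N. (c (p mod r))\<^sup>2) \<le> (\<Sum>p<r * N. \<Sum>q<r * N. g (p mod r) (q mod r))"
      unfolding g_def by (rule kernel_pairing_sum_ge) (use Q False in simp)
    also have "(\<Sum>p<r * N. \<Sum>q<r * N. g (p mod r) (q mod r)) = real N * (\<Sum>p<r * N. \<Sum>j<r. g (p mod r) j)"
      by (simp add: sum_mod_replicate[of "g _"] sum_distrib_left)
    also have "\<dots> = real N * (real N * (\<Sum>i<r. \<Sum>j<r. g i j))"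
      using sum_mod_replicate[of "\<lambda>i. \<Sum>j<r. g i j" r N] by simp
    also have "\<dots> = (real N)\<^sup>2 * kernel_gram \<kappa> Q r c c"
      by (simp add: kernel_gram_def g_def power2_eq_square)
    finally show ?thesis
      using sum_mod_replicate[of "\<lambda>i. (c i)\<^sup>2" r N] by simp
  qed
  then show ?thesis by (rule nonneg_if_quadratic_lower_bound)
qed (simp add: kernel_gram_def)

lemma kernel_gram_commute:
  assumes Q: "\<And>i. i < r \<Longrightarrow> prob_on S (Q i)"
  shows "kernel_gram \<kappa> Q r a b = kernel_gram \<kappa> Q r b a"
  unfolding kernel_gram_def using Q
  by (subst sum.swap) (intro sum.cong refl, simp add: kernel_pairing_commute)

lemma kernel_gram_expand:
  assumes Q: "\<And>i. i < r \<Longrightarrow> prob_on S (Q i)"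
  shows "kernel_gram \<kappa> Q r (\<lambda>i. t * a i + b i) (\<lambda>i. t * a i + b i)
    = t\<^sup>2 * kernel_gram \<kappa> Q r a a + 2 * t * kernel_gram \<kappa> Q r a b + kernel_gram \<kappa> Q r b b"
proof -
  have "(t * a i + b i) * (t * a j + b j) * G = t\<^sup>2 * (a i * a j * G) + t * (a i * b j * G) + t * (b i * a j * G) + b i * b j * G"
    for i j and G :: real
    by (simp add: algebra_simps power2_eq_square)
  then have "kernel_gram \<kappa> Q r (\<lambda>i. t * a i + b i) (\<lambda>i. t * a i + b i)
    = t\<^sup>2 * kernel_gram \<kappa> Q r a a + t * kernel_gram \<kappa> Q r a b + t * kernel_gram \<kappa> Q r b a + kernel_gram \<kappa> Q r b b"
    by (simp only: kernel_gram_def sum.distrib sum_distrib_left)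
  then show ?thesis
    using kernel_gram_commute[OF Q, where a=a and b=b] by simp
qed

lemma kernel_gram_cauchy_schwarz:
  assumes Q: "\<And>i. i < r \<Longrightarrow> prob_on S (Q i)"
  shows "(kernel_gram \<kappa> Q r a b)\<^sup>2 \<le> kernel_gram \<kappa> Q r a a * kernel_gram \<kappa> Q r b b"
proof (rule quadratic_nonneg_discriminant)
  show "0 \<le> kernel_gram \<kappa> Q r a a" by (rule kernel_gram_nonneg[OF Q])
  fix t
  show "0 \<le> t\<^sup>2 * kernel_gram \<kappa> Q r a a + 2 * t * kernel_gram \<kappa> Q r a b + kernel_gram \<kappa> Q r b b"
    using kernel_gram_nonneg[OF Q, where c="\<lambda>i. t * a i + b i"]
    by (simp only: kernel_gram_expand[OF Q])
qed

lemma kernel_gram_triangle: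
  assumes Q: "\<And>i. i < r \<Longrightarrow> prob_on S (Q i)"
  shows "sqrt (kernel_gram \<kappa> Q r (\<lambda>i. a i + b i) (\<lambda>i. a i + b i))
    \<le> sqrt (kernel_gram \<kappa> Q r a a) + sqrt (kernel_gram \<kappa> Q r b b)"
  using sqrt_add_le_of_cauchy_schwarz[OF kernel_gram_cauchy_schwarz[OF Q]
      kernel_gram_nonneg[OF Q] kernel_gram_nonneg[OF Q]]
    kernel_gram_expand[OF Q, where t=1 and a=a and b=b]
  by simp

lemma mmd2_eq_kernel_gram:
  assumes "prob_on S P" "prob_on S Q"
  shows "mmd2 \<kappa> P Q = kernel_gram \<kappa> ((!) [P, Q]) 2 ((!) [1, -1]) ((!) [1, -1])"
  using kernel_pairing_commute[OF assms]
  by (simp add: kernel_gram_def mmd2_kernel_pairing numeral_2_eq_2)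

lemma mmd2_nonneg:
  assumes "prob_on S P" "prob_on S Q"
  shows "0 \<le> mmd2 \<kappa> P Q"
  unfolding mmd2_eq_kernel_gram[OF assms]
  using assms by (intro kernel_gram_nonneg) (auto simp: less_2_cases_iff)

lemma power2_mmd:
  assumes "prob_on S P" "prob_on S Q"
  shows "(mmd \<kappa> P Q)\<^sup>2 = mmd2 \<kappa> P Q"
  using mmd2_nonneg[OF assms] by (simp add: mmd_def)

lemma mmd_nonneg:
  assumes "prob_on S P" "prob_on S Q"
  shows "0 \<le> mmd \<kappa> P Q"
  using mmd2_nonneg[OF assms] by (simp add: mmd_def)

lemma mmd_commute:
  assumes "prob_on S P" "prob_on S Q"
  shows "mmd \<kappa> P Q = mmd \<kappa> Q P"
  using kernel_pairing_commute[OF assms] by (simp add: mmd_def mmd2_kernel_pairing)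

lemma mmd_le_2:
  assumes "prob_on S P" "prob_on S Q"
  shows "mmd \<kappa> P Q \<le> 2"
proof -
  have "mmd2 \<kappa> P Q \<le> 2\<^sup>2"
    using abs_kernel_pairing_le_1[OF assms(1,1)] abs_kernel_pairing_le_1[OF assms]
      abs_kernel_pairing_le_1[OF assms(2,2)]
    by (simp add: mmd2_kernel_pairing abs_le_iff)
  then show ?thesis
    unfolding mmd_def by (metis real_sqrt_le_mono real_sqrt_abs abs_numeral)
qed

lemma mmd_triangle:
  assumes P: "prob_on S P" and Q: "prob_on S Q" and R: "prob_on S R"
  shows "mmd \<kappa> P R \<le> mmd \<kappa> P Q + mmd \<kappa> Q R"
proof -
  let ?Qs = "(!) [P, Q, R]" and ?a = "(!) [1, -1, 0]" and ?b = "(!) [0, 1, -1]"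
  have Qs: "prob_on S (?Qs i)" if "i < 3" for i
    using that P Q R by (auto simp: numeral_3_eq_3 less_Suc_eq)
  have "mmd2 \<kappa> P R = kernel_gram \<kappa> ?Qs 3 (\<lambda>i. ?a i + ?b i) (\<lambda>i. ?a i + ?b i)"
    "mmd2 \<kappa> P Q = kernel_gram \<kappa> ?Qs 3 ?a ?a" "mmd2 \<kappa> Q R = kernel_gram \<kappa> ?Qs 3 ?b ?b"
    using kernel_pairing_commute[OF P Q] kernel_pairing_commute[OF P R] kernel_pairing_commute[OF Q R]
    by (simp_all add: kernel_gram_def mmd2_kernel_pairing numeral_3_eq_3 lessThan_Suc)
  then show ?thesis
    unfolding mmd_def using kernel_gram_triangle[OF Qs] by simp
qed

lemma abs_diff_power2_mmd_le:
  assumes P: "prob_on S P" and P': "prob_on S P'" and R: "prob_on S R"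
  shows "\<bar>(mmd \<kappa> P R)\<^sup>2 - (mmd \<kappa> P' R)\<^sup>2\<bar> \<le> 4 * mmd \<kappa> P P'"
proof -
  have "\<bar>mmd \<kappa> P R - mmd \<kappa> P' R\<bar> \<le> mmd \<kappa> P P'"
    using mmd_triangle[OF P P' R] mmd_triangle[OF P' P R] mmd_commute[OF P P'] by linarith
  moreover have "mmd \<kappa> P R + mmd \<kappa> P' R \<le> 4"
    using mmd_le_2[OF P R] mmd_le_2[OF P' R] by linarith
  ultimately have "\<bar>mmd \<kappa> P R - mmd \<kappa> P' R\<bar> * (mmd \<kappa> P R + mmd \<kappa> P' R) \<le> mmd \<kappa> P P' * 4"
    using mmd_nonneg[OF P R] mmd_nonneg[OF P' R] by (intro mult_mono) auto
  then show ?thesis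
    by (simp add: power2_eq_square abs_mult square_diff_square_factored mult.commute
        mmd_nonneg[OF P R] mmd_nonneg[OF P' R])
qed

lemma measurable_kernel_diagonal:
  assumes "sets M = sets S"
  shows "(\<lambda>w. \<kappa> w w) \<in> borel_measurable M"
proof -
  have "(\<lambda>w. (w, w)) \<in> M \<rightarrow>\<^sub>M M \<Otimes>\<^sub>M M" by measurable
  from measurable_comp[OF this measurable_kernel[OF assms assms]] show ?thesis
    by (simp add: comp_def)
qed

lemma power2_mmd_return:
  assumes P: "prob_on S P" and w: "w \<in> space S"
  shows "(mmd \<kappa> P (return S w))\<^sup>2 = kernel_pairing \<kappa> P P - 2 * (\<integral>y. \<kappa> w y \<partial>P) + \<kappa> w w"
proof -
  have R: "prob_on S (return S w)" by (rule prob_on_return[OF w])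
  have "kernel_pairing \<kappa> (return S w) (return S w) = \<kappa> w w"
    using integral_return[OF w measurable_kernel_section[OF refl w]]
    by (simp add: kernel_pairing_return_left[OF R w])
  then show ?thesis
    by (simp add: power2_mmd[OF P R] mmd2_kernel_pairing kernel_pairing_commute[OF P R]
        kernel_pairing_return_left[OF P w])
qed

lemma measurable_power2_mmd_return:
  assumes P: "prob_on S P" and M: "sets M = sets S"
  shows "(\<lambda>w. (mmd \<kappa> P (return S w))\<^sup>2) \<in> borel_measurable M"
proof -
  have "(mmd \<kappa> P (return S w))\<^sup>2 = kernel_pairing \<kappa> P P - 2 * (\<integral>y. \<kappa> w y \<partial>P) + \<kappa> w w"
    if "w \<in> space M" for w
    using that sets_eq_imp_space_eq[OF M] by (simp add: power2_mmd_return[OF P])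
  then have "?thesis \<longleftrightarrow>
      (\<lambda>w. kernel_pairing \<kappa> P P - 2 * (\<integral>y. \<kappa> w y \<partial>P) + \<kappa> w w) \<in> borel_measurable M"
    by (rule measurable_cong)
  also have "\<dots>"
    using measurable_kernel_integral[OF P M] measurable_kernel_diagonal[OF M] by measurable
  finally show ?thesis .
qed

lemma integral_power2_mmd_return:
  assumes P: "prob_on S P" and C: "prob_on S C"
  shows "(\<integral>w. (mmd \<kappa> P (return S w))\<^sup>2 \<partial>C)
    = (mmd \<kappa> P C)\<^sup>2 + kernel_variance \<kappa> C"
proof -
  interpret C: prob_space C using C by (simp add: prob_on_def)
  have sets: "sets C = sets S" using C by (simp add: prob_on_def)
  have int_P: "integrable C (\<lambda>w. \<integral>y. \<kappa> w y \<partial>P)"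
    using C P by (intro C.integrable_bounded[where B=1] measurable_kernel_integral abs_kernel_integral_le_1)
      (auto simp: sets prob_on_space)
  have int_diag: "integrable C (\<lambda>w. \<kappa> w w)"
    using C by (intro C.integrable_bounded[where B=1] measurable_kernel_diagonal abs_kernel_le_1)
      (auto simp: sets prob_on_space)
  have "(\<integral>w. (mmd \<kappa> P (return S w))\<^sup>2 \<partial>C)
      = (\<integral>w. kernel_pairing \<kappa> P P - 2 * (\<integral>y. \<kappa> w y \<partial>P) + \<kappa> w w \<partial>C)"
    using C by (intro Bochner_Integration.integral_cong refl) (simp add: power2_mmd_return[OF P] prob_on_space)
  also have "\<dots> = kernel_pairing \<kappa> P P - 2 * kernel_pairing \<kappa> C P + (\<integral>w. \<kappa> w w \<partial>C)"
    using int_P int_diag by (simp add: kernel_pairing_def C.prob_space)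
  also have "\<dots> = (mmd \<kappa> P C)\<^sup>2 + kernel_variance \<kappa> C"
    by (simp add: power2_mmd[OF P C] mmd2_kernel_pairing kernel_pairing_commute[OF P C] kernel_variance_def)
  finally show ?thesis .
qed

end

section \<open>Laws of large numbers for bounded losses\<close>

lemma AE_LIMSEQ_of_AE_eventually_dist:
  fixes X :: "nat \<Rightarrow> 'a \<Rightarrow> 'b::metric_space"
  assumes "\<And>\<epsilon>. \<epsilon> > 0 \<Longrightarrow> AE \<omega> in M. eventually (\<lambda>n. dist (X n \<omega>) l < \<epsilon>) sequentially"
  shows "AE \<omega> in M. (\<lambda>n. X n \<omega>) \<longlonglongrightarrow> l"
proof -
  have "AE \<omega> in M. \<forall>j::nat. eventually (\<lambda>n. dist (X n \<omega>) l < 1 / Suc j) sequentially"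
    unfolding AE_all_countable using assms by simp
  then show ?thesis
  proof (rule eventually_mono, intro tendstoI)
    fix \<omega> and \<epsilon> :: real
    assume close: "\<forall>j::nat. eventually (\<lambda>n. dist (X n \<omega>) l < 1 / Suc j) sequentially" and "\<epsilon> > 0"
    then obtain j :: nat where j: "1 / Suc j < \<epsilon>"
      by (metis nat_approx_posE of_nat_Suc)
    from close have "eventually (\<lambda>n. dist (X n \<omega>) l < 1 / Suc j) sequentially" ..
    then show "eventually (\<lambda>n. dist (X n \<omega>) l < \<epsilon>) sequentially"
      by (rule eventually_mono) (use j in linarith)
  qed
qed

lemma (in prob_space) prob_average_deviation_le:
  fixes X :: "nat \<Rightarrow> 'a \<Rightarrow> real"
  assumes indep: "indep_vars (\<lambda>_. borel) X UNIV"
    and law: "\<And>i. distr M borel (X i) = distr M borel (X 0)"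
    and bounded: "\<And>i x. \<bar>X i x\<bar> \<le> b" and "b > 0" and "\<epsilon> > 0"
  shows "prob {\<omega> \<in> space M. \<epsilon> \<le> \<bar>(\<Sum>i<Suc n. X i \<omega>) / Suc n - expectation (X 0)\<bar>}
    \<le> 2 * exp (- \<epsilon>\<^sup>2 / (2 * b\<^sup>2)) ^ Suc n"
proof -
  have rv: "random_variable borel (X i)" for i
    using indep by (simp add: indep_vars_def)
  interpret Hoeffding_ineq_iid M "{..<Suc n}" X "X 0" "- b" b "expectation (X 0)"
  proof unfold_locales
    show "indep_vars (\<lambda>_. borel) X {..<Suc n}"
      by (rule indep_vars_subset[OF indep]) simp
    show "AE x in M. X 0 x \<in> {- b..b}"
    proof (rule AE_I2)
      fix x
      have "- b \<le> X 0 x" "X 0 x \<le> b"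
        using bounded[of 0 x] by arith+
      then show "X 0 x \<in> {- b..b}"
        by simp
    qed
    show "distr M borel (X i) = distr M borel (X 0)" for i
      by (rule law)
    show "random_variable borel (X 0)"
      by (rule rv)
  qed simp
  have exponent: "- 2 * real (Suc n) * \<epsilon>\<^sup>2 / (b - - b)\<^sup>2 = real (Suc n) * (- \<epsilon>\<^sup>2 / (2 * b\<^sup>2))"
    using \<open>b > 0\<close> by (simp add: field_simps power2_eq_square)
  have "prob {\<omega> \<in> space M. \<epsilon> \<le> \<bar>(\<Sum>i\<in>{..<Suc n}. X i \<omega>) / real (card {..<Suc n}) - expectation (X 0)\<bar>}
      \<le> 2 * exp (- 2 * real (card {..<Suc n}) * \<epsilon>\<^sup>2 / (b - - b)\<^sup>2)"
    by (rule Hoeffding_ineq_abs_ge') (use \<open>\<epsilon> > 0\<close> \<open>b > 0\<close> in auto)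
  then show ?thesis
    by (simp only: card_lessThan exponent exp_of_nat_mult)
qed

lemma (in prob_space) AE_eventually_average_close:
  fixes X :: "nat \<Rightarrow> 'a \<Rightarrow> real"
  assumes indep: "indep_vars (\<lambda>_. borel) X UNIV"
    and law: "\<And>i. distr M borel (X i) = distr M borel (X 0)"
    and bounded: "\<And>i x. \<bar>X i x\<bar> \<le> B"
    and \<epsilon>: "\<epsilon> > 0"
  shows "AE \<omega> in M. eventually (\<lambda>n. \<bar>(\<Sum>i<Suc n. X i \<omega>) / Suc n - expectation (X 0)\<bar> < \<epsilon>) sequentially"
proof -
  define b where "b = \<bar>B\<bar> + 1"
  define A where "A n = {\<omega>\<in>space M. \<epsilon> \<le> \<bar>(\<Sum>i<Suc n. X i \<omega>) / Suc n - expectation (X 0)\<bar>}" for n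
  have "b > 0"
    unfolding b_def by (simp add: add_nonneg_pos)
  have "\<bar>X i x\<bar> \<le> b" for i x
    using bounded[of i x] by (simp add: b_def)
  from indep law this \<open>b > 0\<close> \<epsilon>
  have tail: "measure M (A n) \<le> 2 * exp (- \<epsilon>\<^sup>2 / (2 * b\<^sup>2)) ^ Suc n" for n
    unfolding A_def by (rule prob_average_deviation_le)
  have "summable (\<lambda>n. 2 * exp (- \<epsilon>\<^sup>2 / (2 * b\<^sup>2)) ^ Suc n)"
    using \<open>b > 0\<close> \<epsilon> by (intro summable_mult) (simp add: summable_geometric_iff)
  then have "summable (\<lambda>n. measure M (A n))"
    by (rule summable_comparison_test'[of _ 0]) (use tail in simp)
  moreover have "A n \<in> sets M" for n
  proof -
    have "random_variable borel (X i)" for i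
      using indep by (simp add: indep_vars_def)
    then show ?thesis
      unfolding A_def by measurable
  qed
  ultimately have "AE \<omega> in M. eventually (\<lambda>n. \<omega> \<in> space M - A n) sequentially"
    by (intro borel_cantelli_AE1) (simp_all add: emeasure_eq_measure)
  then show ?thesis
    by (rule AE_mp) (intro AE_I2 impI, auto elim!: eventually_mono simp: A_def not_le)
qed

lemma strong_law_bounded:
  fixes g :: "'z \<Rightarrow> real" and Z :: "nat \<Rightarrow> 'w \<Rightarrow> 'z"
  assumes \<Omega>: "prob_space \<Omega>"
    and iid: "prob_space.indep_vars \<Omega> (\<lambda>_. N) Z UNIV" "\<And>i. distr \<Omega> N (Z i) = PN"
    and g: "g \<in> borel_measurable N" "\<And>z. \<bar>g z\<bar> \<le> B"
  shows "AE \<omega> in \<Omega>. (\<lambda>n. (\<Sum>i<n. g (Z i \<omega>)) / n) \<longlonglongrightarrow> (\<integral>z. g z \<partial>PN)"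
proof -
  interpret prob_space \<Omega> by fact
  have Z: "Z i \<in> \<Omega> \<rightarrow>\<^sub>M N" for i
    using iid(1) by (simp add: indep_vars_def)
  have law: "distr \<Omega> borel (\<lambda>\<omega>. g (Z i \<omega>)) = distr PN borel g" for i
    using distr_distr[OF g(1) Z, of i] by (simp add: comp_def iid(2))
  have mean: "expectation (\<lambda>\<omega>. g (Z 0 \<omega>)) = (\<integral>z. g z \<partial>PN)"
    using integral_distr[OF Z g(1), of 0] by (simp add: iid(2))
  have indep: "indep_vars (\<lambda>_. borel) (\<lambda>i \<omega>. g (Z i \<omega>)) UNIV"
    using indep_vars_compose[OF iid(1), of "\<lambda>_. g" "\<lambda>_. borel"] g(1) by (simp add: comp_def)
  have "AE \<omega> in \<Omega>. eventually (\<lambda>n. dist ((\<Sum>i<n. g (Z i \<omega>)) / n) (\<integral>z. g z \<partial>PN) < \<epsilon>) sequentially"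
    if "\<epsilon> > 0" for \<epsilon>
  proof -
    have law': "distr \<Omega> borel (\<lambda>\<omega>. g (Z i \<omega>)) = distr \<Omega> borel (\<lambda>\<omega>. g (Z 0 \<omega>))" for i
      by (simp only: law)
    have "AE \<omega> in \<Omega>. eventually (\<lambda>n. dist ((\<Sum>i<Suc n. g (Z i \<omega>)) / Suc n) (\<integral>z. g z \<partial>PN) < \<epsilon>) sequentially"
      using AE_eventually_average_close[OF indep law' g(2) that] unfolding mean dist_real_def .
    then show ?thesis
      by (rule eventually_mono) (subst eventually_sequentially_Suc[symmetric])
  qed
  then show ?thesis
    by (rule AE_LIMSEQ_of_AE_eventually_dist)
qed

lemma abs_average_diff_le:
  fixes x y :: "nat \<Rightarrow> real"
  assumes "\<And>i. i < n \<Longrightarrow> \<bar>x i - y i\<bar> \<le> d" "0 \<le> d"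
  shows "\<bar>(\<Sum>i<n. x i) / n - (\<Sum>i<n. y i) / n\<bar> \<le> d"
proof (cases "n = 0")
  case False
  have "\<bar>(\<Sum>i<n. x i) - (\<Sum>i<n. y i)\<bar> \<le> (\<Sum>i<n. \<bar>x i - y i\<bar>)"
    by (simp only: sum_subtractf[symmetric] sum_abs)
  also have "\<dots> \<le> n * d"
    using sum_mono[of "{..<n}" "\<lambda>i. \<bar>x i - y i\<bar>" "\<lambda>_. d"] assms(1) by simp
  finally show ?thesis
    using False by (simp add: diff_divide_distrib[symmetric] divide_le_eq mult.commute)
qed (use assms in simp)

lemma uniform_convergence_of_finite_nets:
  fixes a :: "'p \<Rightarrow> nat \<Rightarrow> real" and e :: "'p \<Rightarrow> real" and F :: "nat \<Rightarrow> 'p set"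
  assumes "\<And>j. finite (F j)" and conv: "\<And>j \<theta>. \<theta> \<in> F j \<Longrightarrow> a \<theta> \<longlonglongrightarrow> e \<theta>"
    and net: "\<And>j \<theta>. \<theta> \<in> \<Theta> \<Longrightarrow>
      \<exists>\<theta>'\<in>F j. (\<forall>n. \<bar>a \<theta> n - a \<theta>' n\<bar> \<le> 1 / Suc j) \<and> \<bar>e \<theta> - e \<theta>'\<bar> \<le> 1 / Suc j"
    and "\<epsilon> > 0"
  shows "eventually (\<lambda>n. \<forall>\<theta>\<in>\<Theta>. \<bar>a \<theta> n - e \<theta>\<bar> \<le> \<epsilon>) sequentially"
proof -
  obtain j :: nat where j: "1 / Suc j < \<epsilon> / 3"
    using \<open>\<epsilon> > 0\<close> by (metis nat_approx_posE of_nat_Suc zero_less_divide_iff zero_less_numeral)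
  have "eventually (\<lambda>n. \<forall>\<theta>'\<in>F j. dist (a \<theta>' n) (e \<theta>') < \<epsilon> / 3) sequentially"
    using conv \<open>\<epsilon> > 0\<close> by (intro eventually_ball_finite ballI tendstoD) (auto simp: assms(1))
  then show ?thesis
  proof (rule eventually_mono, intro ballI)
    fix n \<theta> assume close: "\<forall>\<theta>'\<in>F j. dist (a \<theta>' n) (e \<theta>') < \<epsilon> / 3" and "\<theta> \<in> \<Theta>"
    then obtain \<theta>' where "\<theta>' \<in> F j" "\<bar>a \<theta> n - a \<theta>' n\<bar> \<le> 1 / Suc j" "\<bar>e \<theta> - e \<theta>'\<bar> \<le> 1 / Suc j"
      using net by blast
    moreover from close \<open>\<theta>' \<in> F j\<close> have "\<bar>a \<theta>' n - e \<theta>'\<bar> < \<epsilon> / 3"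
      by (simp add: dist_real_def)
    ultimately show "\<bar>a \<theta> n - e \<theta>\<bar> \<le> \<epsilon>"
      using j by linarith
  qed
qed

(* Closeness is required only on a set C of full measure: on patterns of probability zero the loss
   need not depend continuously on the parameter. *)
lemma uniform_strong_law:
  fixes f :: "'p \<Rightarrow> 'z \<Rightarrow> real" and Z :: "nat \<Rightarrow> 'w \<Rightarrow> 'z"
  assumes \<Omega>: "prob_space \<Omega>"
    and iid: "prob_space.indep_vars \<Omega> (\<lambda>_. N) Z UNIV" "\<And>i. distr \<Omega> N (Z i) = PN"
    and f: "\<And>\<theta>. \<theta> \<in> \<Theta> \<Longrightarrow> f \<theta> \<in> borel_measurable N" "\<And>\<theta> z. \<theta> \<in> \<Theta> \<Longrightarrow> \<bar>f \<theta> z\<bar> \<le> B"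
    and C: "AE z in PN. z \<in> C"
    and nets: "\<And>\<epsilon>. \<epsilon> > 0 \<Longrightarrow>
      \<exists>F. finite F \<and> F \<subseteq> \<Theta> \<and> (\<forall>\<theta>\<in>\<Theta>. \<exists>\<theta>'\<in>F. \<forall>z\<in>C. \<bar>f \<theta> z - f \<theta>' z\<bar> \<le> \<epsilon>)"
  shows "AE \<omega> in \<Omega>. \<forall>\<epsilon>>0. eventually
    (\<lambda>n. \<forall>\<theta>\<in>\<Theta>. \<bar>(\<Sum>i<n. f \<theta> (Z i \<omega>)) / n - (\<integral>z. f \<theta> z \<partial>PN)\<bar> \<le> \<epsilon>) sequentially"
proof -
  interpret \<Omega>: prob_space \<Omega> by fact
  have Z: "Z i \<in> \<Omega> \<rightarrow>\<^sub>M N" for i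
    using iid(1) by (simp add: \<Omega>.indep_vars_def)
  interpret PN: prob_space PN
    using \<Omega>.prob_space_distr[OF Z] iid(2) by metis
  have sets_PN: "sets PN = sets N"
    using iid(2)[of 0] by (metis sets_distr)
  have integrable: "integrable PN (f \<theta>)" if "\<theta> \<in> \<Theta>" for \<theta>
    using f that by (intro PN.integrable_bounded) (simp_all add: measurable_cong_sets[OF sets_PN refl])
  have "\<exists>F. finite F \<and> F \<subseteq> \<Theta> \<and> (\<forall>\<theta>\<in>\<Theta>. \<exists>\<theta>'\<in>F. \<forall>z\<in>C. \<bar>f \<theta> z - f \<theta>' z\<bar> \<le> 1 / Suc j)" for j
    by (rule nets) simp
  then obtain F where F: "\<And>j. finite (F j)" "\<And>j. F j \<subseteq> \<Theta>"
    "\<And>j \<theta>. \<theta> \<in> \<Theta> \<Longrightarrow> \<exists>\<theta>'\<in>F j. \<forall>z\<in>C. \<bar>f \<theta> z - f \<theta>' z\<bar> \<le> 1 / Suc j"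
    by metis
  have "AE \<omega> in \<Omega>. \<forall>\<theta>\<in>F j. (\<lambda>n. (\<Sum>i<n. f \<theta> (Z i \<omega>)) / n) \<longlonglongrightarrow> (\<integral>z. f \<theta> z \<partial>PN)" for j
    using F(2) by (intro AE_finite_allI[OF F(1)] strong_law_bounded[OF \<Omega> iid f]) auto
  then have "AE \<omega> in \<Omega>. \<forall>j. \<forall>\<theta>\<in>F j. (\<lambda>n. (\<Sum>i<n. f \<theta> (Z i \<omega>)) / n) \<longlonglongrightarrow> (\<integral>z. f \<theta> z \<partial>PN)"
    unfolding AE_all_countable ..
  moreover have "AE \<omega> in \<Omega>. Z i \<omega> \<in> C" for i
    using C unfolding iid(2)[symmetric, of i] by (rule AE_distrD[OF Z])
  then have "AE \<omega> in \<Omega>. \<forall>i. Z i \<omega> \<in> C"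
    unfolding AE_all_countable ..
  ultimately show ?thesis
  proof eventually_elim
    case (elim \<omega>)
    have net: "\<exists>\<theta>'\<in>F j. (\<forall>n. \<bar>(\<Sum>i<n. f \<theta> (Z i \<omega>)) / n - (\<Sum>i<n. f \<theta>' (Z i \<omega>)) / n\<bar> \<le> 1 / Suc j)
        \<and> \<bar>(\<integral>z. f \<theta> z \<partial>PN) - (\<integral>z. f \<theta>' z \<partial>PN)\<bar> \<le> 1 / Suc j"
      if \<theta>: "\<theta> \<in> \<Theta>" for j \<theta>
    proof -
      obtain \<theta>' where "\<theta>' \<in> F j" and close: "\<forall>z\<in>C. \<bar>f \<theta> z - f \<theta>' z\<bar> \<le> 1 / Suc j"
        using F(3)[OF \<theta>] by blast
      have "\<bar>(\<Sum>i<n. f \<theta> (Z i \<omega>)) / n - (\<Sum>i<n. f \<theta>' (Z i \<omega>)) / n\<bar> \<le> 1 / Suc j" for n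
        using close elim(2) by (intro abs_average_diff_le) auto
      moreover have "AE z in PN. \<bar>f \<theta> z - f \<theta>' z\<bar> \<le> 1 / Suc j"
        using C by (rule AE_mp) (use close in auto)
      then have "\<bar>(\<integral>z. f \<theta> z \<partial>PN) - (\<integral>z. f \<theta>' z \<partial>PN)\<bar> \<le> 1 / Suc j"
        using \<theta> \<open>\<theta>' \<in> F j\<close> F(2) by (intro PN.abs_integral_diff_le integrable) auto
      ultimately show ?thesis
        using \<open>\<theta>' \<in> F j\<close> by blast
    qed
    show ?case
    proof (intro allI impI)
      fix \<epsilon> :: real assume "\<epsilon> > 0"
      show "eventually (\<lambda>n. \<forall>\<theta>\<in>\<Theta>.
          \<bar>(\<Sum>i<n. f \<theta> (Z i \<omega>)) / n - (\<integral>z. f \<theta> z \<partial>PN)\<bar> \<le> \<epsilon>) sequentially"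
        by (rule uniform_convergence_of_finite_nets[OF F(1) _ net \<open>\<epsilon> > 0\<close>]) (use elim(1) in blast)
    qed
  qed
qed

section \<open>Minimisers under uniform convergence\<close>

lemma compact_finite_net:
  fixes \<Theta> :: "'p::metric_space set" and d :: "'p \<Rightarrow> 'p \<Rightarrow> real"
  assumes "compact \<Theta>" and refl: "\<And>\<theta>. \<theta> \<in> \<Theta> \<Longrightarrow> d \<theta> \<theta> = 0"
    and cont: "\<And>\<theta>'. \<theta>' \<in> \<Theta> \<Longrightarrow> ((\<lambda>\<theta>. d \<theta> \<theta>') \<longlongrightarrow> 0) (at \<theta>' within \<Theta>)"
    and "\<epsilon> > 0"
  obtains F where "finite F" "F \<subseteq> \<Theta>" "\<And>\<theta>. \<theta> \<in> \<Theta> \<Longrightarrow> \<exists>\<theta>'\<in>F. d \<theta> \<theta>' < \<epsilon>"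
proof -
  have "\<exists>\<delta>>0. \<forall>\<theta>\<in>\<Theta>. dist \<theta> \<theta>' < \<delta> \<longrightarrow> d \<theta> \<theta>' < \<epsilon>" if "\<theta>' \<in> \<Theta>" for \<theta>'
  proof -
    have "eventually (\<lambda>\<theta>. dist (d \<theta> \<theta>') 0 < \<epsilon>) (at \<theta>' within \<Theta>)"
      using cont[OF that] \<open>\<epsilon> > 0\<close> by (rule tendstoD)
    then obtain \<delta> where "\<delta> > 0"
      and \<delta>: "\<And>\<theta>. \<theta> \<in> \<Theta> \<Longrightarrow> \<theta> \<noteq> \<theta>' \<Longrightarrow> dist \<theta> \<theta>' < \<delta> \<Longrightarrow> dist (d \<theta> \<theta>') 0 < \<epsilon>"
      unfolding eventually_at by blast
    show ?thesis
    proof (intro exI[of _ \<delta>] conjI ballI impI)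
      fix \<theta> assume \<theta>: "\<theta> \<in> \<Theta>" "dist \<theta> \<theta>' < \<delta>"
      show "d \<theta> \<theta>' < \<epsilon>"
      proof (cases "\<theta> = \<theta>'")
        case True
        then show ?thesis using refl[OF that] \<open>\<epsilon> > 0\<close> by simp
      next
        case False
        then show ?thesis using \<delta>[OF \<theta>(1) False \<theta>(2)] by (simp add: dist_real_def abs_less_iff)
      qed
    qed fact
  qed
  then obtain \<delta> where \<delta>: "\<And>\<theta>'. \<theta>' \<in> \<Theta> \<Longrightarrow> \<delta> \<theta>' > 0"
    "\<And>\<theta>' \<theta>. \<theta>' \<in> \<Theta> \<Longrightarrow> \<theta> \<in> \<Theta> \<Longrightarrow> dist \<theta> \<theta>' < \<delta> \<theta>' \<Longrightarrow> d \<theta> \<theta>' < \<epsilon>"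
    by metis
  have cover: "\<Theta> \<subseteq> (\<Union>\<theta>'\<in>\<Theta>. ball \<theta>' (\<delta> \<theta>'))"
    using \<delta>(1) by force
  obtain F where F: "F \<subseteq> \<Theta>" "finite F" "\<Theta> \<subseteq> (\<Union>\<theta>'\<in>F. ball \<theta>' (\<delta> \<theta>'))"
    using compactE_image[OF \<open>compact \<Theta>\<close> _ cover] by blast
  show ?thesis
  proof (rule that[OF F(2,1)])
    fix \<theta> assume "\<theta> \<in> \<Theta>"
    then obtain \<theta>' where "\<theta>' \<in> F" "dist \<theta>' \<theta> < \<delta> \<theta>'"
      using F(3) by auto
    then show "\<exists>\<theta>'\<in>F. d \<theta> \<theta>' < \<epsilon>"
      using \<delta>(2) F(1) \<open>\<theta> \<in> \<Theta>\<close> by (auto simp: dist_commute)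
  qed
qed

lemma tendsto_argmin_of_uniform_convergence:
  fixes \<Theta> :: "'p::metric_space set" and L :: "'p \<Rightarrow> real" and E :: "nat \<Rightarrow> 'p \<Rightarrow> real"
  assumes "compact \<Theta>" and cont: "continuous_on \<Theta> L" and "\<theta>0 \<in> \<Theta>"
    and unique: "\<And>\<theta>. \<theta> \<in> \<Theta> \<Longrightarrow> \<theta> \<noteq> \<theta>0 \<Longrightarrow> L \<theta>0 < L \<theta>"
    and t: "\<And>n. t n \<in> \<Theta>" "\<And>n \<theta>. \<theta> \<in> \<Theta> \<Longrightarrow> E n (t n) \<le> E n \<theta>"
    and uniform: "\<And>\<epsilon>. \<epsilon> > 0 \<Longrightarrow> eventually (\<lambda>n. \<forall>\<theta>\<in>\<Theta>. \<bar>E n \<theta> - L \<theta>\<bar> \<le> \<epsilon>) sequentially"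
  shows "t \<longlonglongrightarrow> \<theta>0"
proof (rule tendstoI)
  fix \<epsilon> :: real assume "\<epsilon> > 0"
  define K where "K = \<Theta> - ball \<theta>0 \<epsilon>"
  show "eventually (\<lambda>n. dist (t n) \<theta>0 < \<epsilon>) sequentially"
  proof (cases "K = {}")
    case True
    then have "dist (t n) \<theta>0 < \<epsilon>" for n
      using t(1)[of n] by (auto simp: K_def dist_commute)
    then show ?thesis
      by simp
  next
    case False
    have "compact K"
      unfolding K_def using \<open>compact \<Theta>\<close> by (intro compact_diff) auto
    then obtain \<theta>K where "\<theta>K \<in> K" and min: "\<And>\<theta>. \<theta> \<in> K \<Longrightarrow> L \<theta>K \<le> L \<theta>"
      using continuous_attains_inf[OF _ False continuous_on_subset[OF cont]] unfolding K_def by blast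
    define \<delta> where "\<delta> = L \<theta>K - L \<theta>0"
    have "\<theta>K \<in> \<Theta>" "\<theta>K \<noteq> \<theta>0"
      using \<open>\<theta>K \<in> K\<close> \<open>\<epsilon> > 0\<close> by (auto simp: K_def)
    then have "\<delta> > 0"
      using unique by (simp add: \<delta>_def)
    have "eventually (\<lambda>n. \<forall>\<theta>\<in>\<Theta>. \<bar>E n \<theta> - L \<theta>\<bar> \<le> \<delta> / 3) sequentially"
      using \<open>\<delta> > 0\<close> by (intro uniform) simp
    then show ?thesis
    proof (rule eventually_mono)
      fix n assume close: "\<forall>\<theta>\<in>\<Theta>. \<bar>E n \<theta> - L \<theta>\<bar> \<le> \<delta> / 3"
      have "\<bar>E n (t n) - L (t n)\<bar> \<le> \<delta> / 3" "\<bar>E n \<theta>0 - L \<theta>0\<bar> \<le> \<delta> / 3"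
        using close t(1) \<open>\<theta>0 \<in> \<Theta>\<close> by auto
      then have "L (t n) < L \<theta>K"
        using t(2)[OF \<open>\<theta>0 \<in> \<Theta>\<close>, of n] \<open>\<delta> > 0\<close> \<delta>_def by linarith
      then have "t n \<notin> K"
        using min by (meson not_le)
      then show "dist (t n) \<theta>0 < \<epsilon>"
        using t(1) by (simp add: K_def dist_commute)
    qed
  qed
qed

section \<open>The missing-data model\<close>

lemma measurable_subvec: "subvec m \<in> Xspace \<rightarrow>\<^sub>M Ospace m"
  unfolding subvec_def Xspace_def Ospace_def by (rule measurable_restrict_subset) simp

lemma subvec_in_space: "subvec m x \<in> space (Ospace m)"
  by (simp add: subvec_def Ospace_def space_PiM)

lemma measurable_subvec_fst: "(\<lambda>z. subvec m (fst z)) \<in> XMspace \<rightarrow>\<^sub>M Ospace m"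
  using measurable_comp[OF measurable_fst measurable_subvec] by (simp add: XMspace_def comp_def)

lemma prob_on_marg:
  assumes "prob_space Q" "sets Q = sets Xspace"
  shows "prob_on (Ospace m) (marg m Q)"
  unfolding prob_on_def marg_def
proof
  have "subvec m \<in> Q \<rightarrow>\<^sub>M Ospace m"
    unfolding measurable_cong_sets[OF assms(2) refl] by (rule measurable_subvec)
  then show "prob_space (distr Q (Ospace m) (subvec m))"
    by (rule prob_space.prob_space_distr[OF assms(1)])
qed simp

lemma pattern_in_sets: "UNIV \<times> {m} \<in> sets XMspace"
proof -
  have "space Xspace \<times> {m} \<in> sets (Xspace \<Otimes>\<^sub>M Mspace)"
    by (rule pair_measureI) (auto simp: Mspace_def)
  then show ?thesis
    by (simp add: XMspace_def Xspace_def space_PiM PiE_UNIV_domain)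
qed

lemma measurable_fst_uniform_measure:
  assumes "sets PXM = sets XMspace"
  shows "fst \<in> uniform_measure PXM A \<rightarrow>\<^sub>M Xspace"
  unfolding measurable_cong_sets[OF sets_uniform_measure refl] measurable_cong_sets[OF assms refl]
  unfolding XMspace_def by (rule measurable_fst)

lemma prob_on_marg_condX:
  assumes PXM: "prob_space PXM" "sets PXM = sets XMspace" and "probM PXM m > 0"
  shows "prob_on (Ospace m) (marg m (condX PXM m))"
proof (rule prob_on_marg)
  interpret prob_space PXM by fact
  have "prob_space (uniform_measure PXM (UNIV \<times> {m}))"
    using assms pattern_in_sets
    by (intro prob_space_uniform_measure) (auto simp: probM_def emeasure_eq_measure)
  moreover note measurable_fst_uniform_measure[OF PXM(2)]
  ultimately show "prob_space (condX PXM m)"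
    unfolding condX_def by (rule prob_space.prob_space_distr)
qed (simp add: condX_def)

(* For a pattern of probability zero, condX PXM m is an arbitrary measure, but it is weighted by 0. *)
lemma integral_pattern_indicator:
  fixes h :: "('d \<Rightarrow> real) \<Rightarrow> real"
  assumes PXM: "prob_space PXM" "sets PXM = sets XMspace"
    and h: "h \<in> borel_measurable (Ospace m)"
  shows "(\<integral>z. indicator (UNIV \<times> {m}) z * h (subvec m (fst z)) \<partial>PXM)
       = probM PXM m * (\<integral>w. h w \<partial>marg m (condX PXM m))"
proof -
  interpret prob_space PXM by fact
  define A where "A = (UNIV :: ('d \<Rightarrow> real) set) \<times> {m}"
  have A: "A \<in> sets PXM" "measure PXM A = probM PXM m"
    using pattern_in_sets PXM(2) by (auto simp: A_def probM_def)
  have hm: "(\<lambda>z. h (subvec m (fst z))) \<in> borel_measurable PXM"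
    unfolding measurable_cong_sets[OF PXM(2) refl]
    using measurable_comp[OF measurable_subvec_fst h] by (simp add: comp_def)
  show ?thesis
  proof (cases "probM PXM m = 0")
    case True
    then have "AE z in PXM. z \<notin> A"
      using A by (intro AE_not_in) (simp add: null_sets_def emeasure_eq_measure)
    then have "(\<integral>z. indicator A z * h (subvec m (fst z)) \<partial>PXM) = (\<integral>z. 0 \<partial>PXM)"
      using A hm by (intro integral_cong_AE) auto
    then show ?thesis
      using True by (simp add: A_def)
  next
    case False
    then have pos: "probM PXM m > 0"
      by (simp add: probM_def order_less_le)
    have "(\<integral>w. h w \<partial>marg m (condX PXM m)) = (\<integral>x. h (subvec m x) \<partial>condX PXM m)"
      unfolding marg_def using measurable_subvec h
      by (intro integral_distr) (simp_all add: condX_def)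
    also have "\<dots> = (\<integral>z. h (subvec m (fst z)) \<partial>uniform_measure PXM A)"
      unfolding condX_def A_def[symmetric]
      using measurable_fst_uniform_measure[OF PXM(2)] measurable_comp[OF measurable_subvec h]
      by (intro integral_distr) (simp_all add: comp_def)
    also have "\<dots> = (\<integral>z. indicator A z * h (subvec m (fst z)) \<partial>PXM) / probM PXM m"
      using A pos hm by (simp add: integral_uniform_measure)
    finally show ?thesis
      using pos by (simp add: A_def)
  qed
qed

definition pattern_loss ::
  "('d set \<Rightarrow> ('d \<Rightarrow> real) \<Rightarrow> ('d \<Rightarrow> real) \<Rightarrow> real) \<Rightarrow> ('p \<Rightarrow> ('d \<Rightarrow> real) measure)
   \<Rightarrow> 'p \<Rightarrow> ('d \<Rightarrow> bool) \<Rightarrow> ('d \<Rightarrow> real) \<Rightarrow> real" where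
  "pattern_loss k P \<theta> m w = (mmd (k (obs m)) (marg m (P \<theta>)) (return (Ospace m) w))\<^sup>2"

definition mmd_loss ::
  "('d set \<Rightarrow> ('d \<Rightarrow> real) \<Rightarrow> ('d \<Rightarrow> real) \<Rightarrow> real) \<Rightarrow> ('p \<Rightarrow> ('d \<Rightarrow> real) measure)
   \<Rightarrow> 'p \<Rightarrow> ('d \<Rightarrow> real) \<times> ('d \<Rightarrow> bool) \<Rightarrow> real" where
  "mmd_loss k P \<theta> z =
     (if snd z = empty_pattern then 0 else pattern_loss k P \<theta> (snd z) (subvec (snd z) (fst z)))"

lemma emp_risk_eq_average: "emp_risk k P z n \<theta> = (\<Sum>i<n. mmd_loss k P \<theta> (z i)) / n"
  unfolding emp_risk_def mmd_loss_def pattern_loss_def by simp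

lemma mmd_loss_eq_sum:
  fixes z :: "('d::finite \<Rightarrow> real) \<times> ('d \<Rightarrow> bool)"
  shows "mmd_loss k P \<theta> z = (\<Sum>m\<in>UNIV - {empty_pattern}.
     indicator (UNIV \<times> {m}) z * pattern_loss k P \<theta> m (subvec m (fst z)))"
proof -
  have "(\<Sum>m\<in>UNIV - {empty_pattern}. indicator (UNIV \<times> {m}) z * pattern_loss k P \<theta> m (subvec m (fst z)))
      = (\<Sum>m\<in>UNIV - {empty_pattern}. if m = snd z then pattern_loss k P \<theta> m (subvec m (fst z)) else 0)"
    by (intro sum.cong refl) (cases z, auto simp: indicator_def)
  also have "\<dots> = (if snd z \<in> UNIV - {empty_pattern}
      then pattern_loss k P \<theta> (snd z) (subvec (snd z) (fst z)) else 0)"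
    by (rule sum.delta) simp
  finally show ?thesis
    by (simp add: mmd_loss_def)
qed

locale missing_mmd_model =
  fixes PXM :: "(('d::finite \<Rightarrow> real) \<times> ('d \<Rightarrow> bool)) measure"
    and k :: "'d set \<Rightarrow> ('d \<Rightarrow> real) \<Rightarrow> ('d \<Rightarrow> real) \<Rightarrow> real"
    and P :: "'p::metric_space \<Rightarrow> ('d \<Rightarrow> real) measure"
    and \<Theta> :: "'p set"
  assumes PXM: "prob_space PXM" "sets PXM = sets XMspace"
    and kernel: "\<And>S. good_kernel_on (PiM S (\<lambda>_. borel)) (k S)"
    and model: "\<And>\<theta>. \<theta> \<in> \<Theta> \<Longrightarrow> prob_space (P \<theta>) \<and> sets (P \<theta>) = sets Xspace"
    and compact: "compact \<Theta>"
    and cont: "\<And>m \<theta>. probM PXM m > 0 \<Longrightarrow> \<theta> \<in> \<Theta> \<Longrightarrow>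
      ((\<lambda>\<theta>'. mmd (k (obs m)) (marg m (P \<theta>')) (marg m (P \<theta>))) \<longlongrightarrow> 0) (at \<theta> within \<Theta>)"
begin

sublocale pattern: good_kernel "Ospace m" "k (obs m)" for m
  unfolding Ospace_def by (rule good_kernel.intro kernel)+

lemma prob_on_model:
  "\<theta> \<in> \<Theta> \<Longrightarrow> prob_on (Ospace m) (marg m (P \<theta>))"
  using model by (simp add: prob_on_marg)

lemma pattern_loss_bounds:
  assumes "\<theta> \<in> \<Theta>" "w \<in> space (Ospace m)"
  shows "0 \<le> pattern_loss k P \<theta> m w" "pattern_loss k P \<theta> m w \<le> 4"
proof -
  let ?d = "mmd (k (obs m)) (marg m (P \<theta>)) (return (Ospace m) w)"
  have "0 \<le> ?d" "?d \<le> 2"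
    using pattern.mmd_nonneg pattern.mmd_le_2 prob_on_model[OF assms(1)] prob_on_return[OF assms(2)] by blast+
  then have "?d\<^sup>2 \<le> 2\<^sup>2"
    by (intro power_mono)
  then show "0 \<le> pattern_loss k P \<theta> m w" "pattern_loss k P \<theta> m w \<le> 4"
    by (simp_all add: pattern_loss_def)
qed

lemma measurable_pattern_loss:
  assumes "\<theta> \<in> \<Theta>"
  shows "(\<lambda>z. pattern_loss k P \<theta> m (subvec m (fst z))) \<in> borel_measurable XMspace"
  using measurable_comp[OF measurable_subvec_fst
      pattern.measurable_power2_mmd_return[OF prob_on_model[OF assms] refl]]
  by (simp add: pattern_loss_def comp_def)

lemma measurable_mmd_loss:
  assumes "\<theta> \<in> \<Theta>"
  shows "mmd_loss k P \<theta> \<in> borel_measurable XMspace"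
  unfolding mmd_loss_eq_sum
  by (intro borel_measurable_sum borel_measurable_times borel_measurable_indicator
      pattern_in_sets measurable_pattern_loss assms)

lemma abs_mmd_loss_le:
  assumes "\<theta> \<in> \<Theta>"
  shows "\<bar>mmd_loss k P \<theta> z\<bar> \<le> 4"
  using pattern_loss_bounds[OF assms subvec_in_space] by (simp add: mmd_loss_def)

lemma abs_mmd_loss_diff_le:
  assumes "\<theta> \<in> \<Theta>" "\<theta>' \<in> \<Theta>"
  shows "\<bar>mmd_loss k P \<theta> z - mmd_loss k P \<theta>' z\<bar>
    \<le> 4 * mmd (k (obs (snd z))) (marg (snd z) (P \<theta>)) (marg (snd z) (P \<theta>'))"
  using pattern.abs_diff_power2_mmd_le[OF prob_on_model[OF assms(1)] prob_on_model[OF assms(2)]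
      prob_on_return[OF subvec_in_space]]
    pattern.mmd_nonneg[OF prob_on_model[OF assms(1)] prob_on_model[OF assms(2)]]
  by (simp add: mmd_loss_def pattern_loss_def)

lemma integrable_pattern_loss:
  assumes "\<theta> \<in> \<Theta>"
  shows "integrable PXM (\<lambda>z. indicator (UNIV \<times> {m}) z * pattern_loss k P \<theta> m (subvec m (fst z)))"
proof (rule prob_space.integrable_bounded[OF PXM(1), where B=4])
  show "(\<lambda>z. indicator (UNIV \<times> {m}) z * pattern_loss k P \<theta> m (subvec m (fst z))) \<in> borel_measurable PXM"
    unfolding measurable_cong_sets[OF PXM(2) refl]
    by (intro borel_measurable_times borel_measurable_indicator pattern_in_sets measurable_pattern_loss assms)
  show "\<bar>indicator (UNIV \<times> {m}) z * pattern_loss k P \<theta> m (subvec m (fst z))\<bar> \<le> 4" for z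
    using pattern_loss_bounds[OF assms subvec_in_space] by (simp add: indicator_def)
qed

lemma integral_pattern_loss:
  assumes "\<theta> \<in> \<Theta>" "probM PXM m > 0"
  shows "(\<integral>w. pattern_loss k P \<theta> m w \<partial>marg m (condX PXM m))
    = (mmd (k (obs m)) (marg m (P \<theta>)) (marg m (condX PXM m)))\<^sup>2
      + kernel_variance (k (obs m)) (marg m (condX PXM m))"
  unfolding pattern_loss_def
  by (rule pattern.integral_power2_mmd_return[OF prob_on_model[OF assms(1)] prob_on_marg_condX[OF PXM assms(2)]])

lemma integral_mmd_loss:
  assumes "\<theta> \<in> \<Theta>"
  shows "(\<integral>z. mmd_loss k P \<theta> z \<partial>PXM) = pop_risk k P PXM \<theta>
    + (\<Sum>m\<in>UNIV - {empty_pattern}. probM PXM m * kernel_variance (k (obs m)) (marg m (condX PXM m)))"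
proof -
  have "(\<integral>z. mmd_loss k P \<theta> z \<partial>PXM) = (\<Sum>m\<in>UNIV - {empty_pattern}.
      \<integral>z. indicator (UNIV \<times> {m}) z * pattern_loss k P \<theta> m (subvec m (fst z)) \<partial>PXM)"
    unfolding mmd_loss_eq_sum
    by (rule Bochner_Integration.integral_sum) (rule integrable_pattern_loss[OF assms])
  also have "\<dots> = (\<Sum>m\<in>UNIV - {empty_pattern}.
      probM PXM m * (\<integral>w. pattern_loss k P \<theta> m w \<partial>marg m (condX PXM m)))"
    using pattern.measurable_power2_mmd_return[OF prob_on_model[OF assms] refl]
    by (intro sum.cong refl integral_pattern_indicator[OF PXM]) (simp add: pattern_loss_def)
  also have "\<dots> = (\<Sum>m\<in>UNIV - {empty_pattern}. probM PXM m *
      ((mmd (k (obs m)) (marg m (P \<theta>)) (marg m (condX PXM m)))\<^sup>2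
        + kernel_variance (k (obs m)) (marg m (condX PXM m))))"
    using measure_nonneg[of PXM]
    by (intro sum.cong refl) (auto simp: integral_pattern_loss[OF assms] probM_def less_le)
  also have "\<dots> = pop_risk k P PXM \<theta>
      + (\<Sum>m\<in>UNIV - {empty_pattern}. probM PXM m * kernel_variance (k (obs m)) (marg m (condX PXM m)))"
    by (simp add: pop_risk_def distrib_left sum.distrib)
  finally show ?thesis .
qed

definition observed_mmd :: "'p \<Rightarrow> 'p \<Rightarrow> real" where
  "observed_mmd \<theta> \<theta>' = (\<Sum>m | probM PXM m > 0. mmd (k (obs m)) (marg m (P \<theta>)) (marg m (P \<theta>')))"

lemma tendsto_observed_mmd:
  assumes "\<theta>' \<in> \<Theta>"
  shows "((\<lambda>\<theta>. observed_mmd \<theta> \<theta>') \<longlongrightarrow> 0) (at \<theta>' within \<Theta>)"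
  unfolding observed_mmd_def using cont assms by (intro tendsto_null_sum) auto

lemma abs_mmd_loss_diff_le_observed_mmd:
  assumes "\<theta> \<in> \<Theta>" "\<theta>' \<in> \<Theta>" "probM PXM (snd z) > 0"
  shows "\<bar>mmd_loss k P \<theta> z - mmd_loss k P \<theta>' z\<bar> \<le> 4 * observed_mmd \<theta> \<theta>'"
proof -
  have "mmd (k (obs (snd z))) (marg (snd z) (P \<theta>)) (marg (snd z) (P \<theta>')) \<le> observed_mmd \<theta> \<theta>'"
    unfolding observed_mmd_def using assms
    by (intro member_le_sum) (auto intro: pattern.mmd_nonneg prob_on_model)
  then show ?thesis
    using abs_mmd_loss_diff_le[OF assms(1,2), of z] by linarith
qed

lemma AE_pattern_in_support: "AE z in PXM. probM PXM (snd z) > 0"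
proof -
  interpret prob_space PXM by (rule PXM)
  have "AE z in PXM. \<forall>m\<in>UNIV. probM PXM m = 0 \<longrightarrow> z \<notin> UNIV \<times> {m}"
  proof (rule AE_finite_allI)
    show "finite (UNIV :: ('d \<Rightarrow> bool) set)" by simp
    fix m :: "'d \<Rightarrow> bool"
    show "AE z in PXM. probM PXM m = 0 \<longrightarrow> z \<notin> UNIV \<times> {m}"
    proof (cases "probM PXM m = 0")
      case True
      then have "UNIV \<times> {m} \<in> null_sets PXM"
        using pattern_in_sets PXM(2) by (simp add: null_sets_def probM_def emeasure_eq_measure)
      then show ?thesis
        by (rule AE_mp[OF AE_not_in]) simp
    qed simp
  qed
  then show ?thesis
  proof (rule eventually_mono)
    fix z assume "\<forall>m\<in>UNIV. probM PXM m = 0 \<longrightarrow> z \<notin> UNIV \<times> {m}"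
    then have "probM PXM (snd z) \<noteq> 0"
      by (cases z) auto
    then show "probM PXM (snd z) > 0"
      by (simp add: probM_def less_le)
  qed
qed

lemma abs_integral_mmd_loss_diff_le:
  assumes "\<theta> \<in> \<Theta>" "\<theta>' \<in> \<Theta>"
  shows "\<bar>(\<integral>z. mmd_loss k P \<theta> z \<partial>PXM) - (\<integral>z. mmd_loss k P \<theta>' z \<partial>PXM)\<bar> \<le> 4 * observed_mmd \<theta> \<theta>'"
proof -
  interpret prob_space PXM by (rule PXM)
  have "integrable PXM (mmd_loss k P \<theta>)" if "\<theta> \<in> \<Theta>" for \<theta>
    using measurable_mmd_loss[OF that] abs_mmd_loss_le[OF that]
    by (intro integrable_bounded[where B=4]) (simp_all add: measurable_cong_sets[OF PXM(2) refl])
  moreover have "AE z in PXM. \<bar>mmd_loss k P \<theta> z - mmd_loss k P \<theta>' z\<bar> \<le> 4 * observed_mmd \<theta> \<theta>'"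
    using AE_pattern_in_support by (rule eventually_mono) (rule abs_mmd_loss_diff_le_observed_mmd[OF assms])
  ultimately show ?thesis
    using assms by (intro abs_integral_diff_le) auto
qed

lemma continuous_on_expected_loss: "continuous_on \<Theta> (\<lambda>\<theta>. \<integral>z. mmd_loss k P \<theta> z \<partial>PXM)"
  unfolding continuous_on_def
proof (intro ballI)
  fix \<theta>' assume "\<theta>' \<in> \<Theta>"
  have "((\<lambda>\<theta>. (\<integral>z. mmd_loss k P \<theta> z \<partial>PXM) - (\<integral>z. mmd_loss k P \<theta>' z \<partial>PXM)) \<longlongrightarrow> 0) (at \<theta>' within \<Theta>)"
  proof (rule Lim_null_comparison)
    show "eventually (\<lambda>\<theta>. norm ((\<integral>z. mmd_loss k P \<theta> z \<partial>PXM) - (\<integral>z. mmd_loss k P \<theta>' z \<partial>PXM))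
        \<le> 4 * observed_mmd \<theta> \<theta>') (at \<theta>' within \<Theta>)"
      unfolding eventually_at_filter
      using \<open>\<theta>' \<in> \<Theta>\<close> by (intro always_eventually) (auto intro: abs_integral_mmd_loss_diff_le)
    show "((\<lambda>\<theta>. 4 * observed_mmd \<theta> \<theta>') \<longlongrightarrow> 0) (at \<theta>' within \<Theta>)"
      using tendsto_mult_right_zero[OF tendsto_observed_mmd[OF \<open>\<theta>' \<in> \<Theta>\<close>]] .
  qed
  then show "((\<lambda>\<theta>. \<integral>z. mmd_loss k P \<theta> z \<partial>PXM) \<longlongrightarrow> (\<integral>z. mmd_loss k P \<theta>' z \<partial>PXM)) (at \<theta>' within \<Theta>)"
    by (rule LIM_zero_cancel)
qed

lemma finite_nets_mmd_loss:
  assumes "\<epsilon> > 0"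
  shows "\<exists>F. finite F \<and> F \<subseteq> \<Theta> \<and> (\<forall>\<theta>\<in>\<Theta>. \<exists>\<theta>'\<in>F.
    \<forall>z\<in>{z. probM PXM (snd z) > 0}. \<bar>mmd_loss k P \<theta> z - mmd_loss k P \<theta>' z\<bar> \<le> \<epsilon>)"
proof -
  have "observed_mmd \<theta> \<theta> = 0" for \<theta>
    by (simp add: observed_mmd_def)
  then obtain F where F: "finite F" "F \<subseteq> \<Theta>" "\<And>\<theta>. \<theta> \<in> \<Theta> \<Longrightarrow> \<exists>\<theta>'\<in>F. observed_mmd \<theta> \<theta>' < \<epsilon> / 4"
    using compact_finite_net[OF compact _ tendsto_observed_mmd, of "\<epsilon> / 4"] assms by auto
  show ?thesis
  proof (intro exI conjI ballI)
    fix \<theta> assume "\<theta> \<in> \<Theta>"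
    then obtain \<theta>' where "\<theta>' \<in> F" "observed_mmd \<theta> \<theta>' < \<epsilon> / 4"
      using F(3) by blast
    show "\<exists>\<theta>'\<in>F. \<forall>z\<in>{z. probM PXM (snd z) > 0}. \<bar>mmd_loss k P \<theta> z - mmd_loss k P \<theta>' z\<bar> \<le> \<epsilon>"
    proof (intro bexI[OF _ \<open>\<theta>' \<in> F\<close>] ballI)
      fix z :: "('d \<Rightarrow> real) \<times> ('d \<Rightarrow> bool)"
      assume "z \<in> {z. probM PXM (snd z) > 0}"
      then have "\<bar>mmd_loss k P \<theta> z - mmd_loss k P \<theta>' z\<bar> \<le> 4 * observed_mmd \<theta> \<theta>'"
        using \<open>\<theta> \<in> \<Theta>\<close> \<open>\<theta>' \<in> F\<close> F(2) by (intro abs_mmd_loss_diff_le_observed_mmd) auto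
      then show "\<bar>mmd_loss k P \<theta> z - mmd_loss k P \<theta>' z\<bar> \<le> \<epsilon>"
        using \<open>observed_mmd \<theta> \<theta>' < \<epsilon> / 4\<close> by linarith
    qed
  qed (use F(1,2) in auto)
qed

lemma AE_uniform_convergence_emp_risk:
  assumes \<Omega>: "prob_space \<Omega>"
    and iid: "prob_space.indep_vars \<Omega> (\<lambda>_. XMspace) Z UNIV" "\<And>i. distr \<Omega> XMspace (Z i) = PXM"
  shows "AE \<omega> in \<Omega>. \<forall>\<epsilon>>0. eventually (\<lambda>n. \<forall>\<theta>\<in>\<Theta>.
    \<bar>emp_risk k P (\<lambda>i. Z i \<omega>) n \<theta> - (\<integral>z. mmd_loss k P \<theta> z \<partial>PXM)\<bar> \<le> \<epsilon>) sequentially"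
  unfolding emp_risk_eq_average
proof (rule uniform_strong_law[OF \<Omega> iid measurable_mmd_loss abs_mmd_loss_le _ finite_nets_mmd_loss])
  show "AE z in PXM. z \<in> {z. probM PXM (snd z) > 0}"
    using AE_pattern_in_support by simp
qed

end

theorem theorem3:
  fixes \<Omega> :: "'w measure"
    and Z :: "nat \<Rightarrow> 'w \<Rightarrow> ('d::finite \<Rightarrow> real) \<times> ('d \<Rightarrow> bool)"
    and PXM :: "(('d \<Rightarrow> real) \<times> ('d \<Rightarrow> bool)) measure"
    and k :: "'d set \<Rightarrow> ('d \<Rightarrow> real) \<Rightarrow> ('d \<Rightarrow> real) \<Rightarrow> real"
    and P :: "'p::metric_space \<Rightarrow> ('d \<Rightarrow> real) measure"
    and \<Theta> :: "'p set"
    and \<theta>n :: "nat \<Rightarrow> 'w \<Rightarrow> 'p"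
    and \<theta>inf :: 'p
  assumes \<Omega>: "prob_space \<Omega>"
    and PXM: "prob_space PXM" "sets PXM = sets XMspace"
    and iid: "prob_space.indep_vars \<Omega> (\<lambda>_. XMspace) Z UNIV"
    and law: "\<And>i. distr \<Omega> XMspace (Z i) = PXM"
    and kernel: "\<And>S. good_kernel_on (PiM S (\<lambda>_. borel)) (k S)"
    and model: "\<And>\<theta>. \<theta> \<in> \<Theta> \<Longrightarrow> prob_space (P \<theta>) \<and> sets (P \<theta>) = sets Xspace"
    and estimator: "\<And>n \<omega>. \<theta>n n \<omega> \<in> \<Theta> \<and>
         (\<forall>\<theta>\<in>\<Theta>. emp_risk k P (\<lambda>i. Z i \<omega>) n (\<theta>n n \<omega>) \<le> emp_risk k P (\<lambda>i. Z i \<omega>) n \<theta>)"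
    and compact: "compact \<Theta>"
    and unique_min: "\<theta>inf \<in> \<Theta>"
      "\<And>\<theta>. \<theta> \<in> \<Theta> \<Longrightarrow> \<theta> \<noteq> \<theta>inf \<Longrightarrow> pop_risk k P PXM \<theta>inf < pop_risk k P PXM \<theta>"
    and cont: "\<And>m \<theta>. probM PXM m > 0 \<Longrightarrow> \<theta> \<in> \<Theta> \<Longrightarrow>
         ((\<lambda>\<theta>'. mmd (k (obs m)) (marg m (P \<theta>')) (marg m (P \<theta>))) \<longlongrightarrow> 0) (at \<theta> within \<Theta>)"
  shows "AE \<omega> in \<Omega>. (\<lambda>n. \<theta>n n \<omega>) \<longlonglongrightarrow> \<theta>inf"
proof -
  interpret missing_mmd_model PXM k P \<Theta>
    using PXM kernel model compact cont by (rule missing_mmd_model.intro)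
  have unique: "(\<integral>z. mmd_loss k P \<theta>inf z \<partial>PXM) < (\<integral>z. mmd_loss k P \<theta> z \<partial>PXM)"
    if "\<theta> \<in> \<Theta>" "\<theta> \<noteq> \<theta>inf" for \<theta>
    using unique_min that by (simp add: integral_mmd_loss)
  show ?thesis
    using AE_uniform_convergence_emp_risk[OF \<Omega> iid law]
  proof eventually_elim
    case (elim \<omega>)
    show ?case
    proof (rule tendsto_argmin_of_uniform_convergence[OF compact continuous_on_expected_loss unique_min(1) unique])
      show "\<theta>n n \<omega> \<in> \<Theta>" for n
        using estimator by blast
      show "emp_risk k P (\<lambda>i. Z i \<omega>) n (\<theta>n n \<omega>) \<le> emp_risk k P (\<lambda>i. Z i \<omega>) n \<theta>" if "\<theta> \<in> \<Theta>" for n \<theta>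
        using estimator that by blast
    qed (use elim in auto)
  qed
qed

end
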